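(* Let $G=(V,E)$ be a simple undirected graph and let $C=(v_0,\ldots,v_{k-1})$, $k\ge 4$, be an ordered list of distinct vertices of $V$ with $\textnormal{int}(C)\cap E=\emptyset$. Then the chordal inequality $$\sum_{f\in\textnormal{int}(C)}x_f-(|C|-3)\Big(\sum_{f\in F(C)}x_f-|F(C)|+1\Big)\ \ge\ 0$$ is facet-defining for $\textnormal{conv}(X(G[V(C)]))$.
   Context: $V(C)=\{v_0,\ldots,v_{k-1}\}$, $|C|=k$, $\textnormal{ext}(C)=\{\{v_{i-1},v_i\}\}_{i=1}^{k-1}\cup\{\{v_{k-1},v_0\}\}$, $\textnormal{int}(C)=\binom{V(C)}{2}\setminus\textnormal{ext}(C)$, $F(C)=\textnormal{ext}(C)\setminus E$. $G[V(C)]$ is the induced subgraph; its set of fill edges $\binom{V(C)}{2}\setminus E$ equals $\textnormal{int}(C)\cup F(C)$. For a graph $H=(V_H,E_H)$ and $x\in\{0,1\}^{E^c(H)}$ with $E^c(H)=\binom{V_H}{2}\setminus E_H$, $E(x)=\{f:x_f=1\}$ and $X(H)=\{x:(V_H,E_H\cup E(x))\text{ is chordal}\}$; a graph is chordal if every cycle with at least four vertices has a chord. *)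

theory Defs
  imports "HOL-Analysis.Analysis"
begin

definition simple_graph :: "'a set \<Rightarrow> 'a set set \<Rightarrow> bool" where
  "simple_graph V E \<longleftrightarrow> (\<forall>e\<in>E. \<exists>u v. e = {u, v} \<and> u \<noteq> v \<and> u \<in> V \<and> v \<in> V)"

definition pairs :: "'a set \<Rightarrow> 'a set set" where
  "pairs S = {{u, v} | u v. u \<in> S \<and> v \<in> S \<and> u \<noteq> v}"

definition ext :: "'a list \<Rightarrow> 'a set set" where
  "ext cs = {{cs ! i, cs ! ((i + 1) mod length cs)} | i. i < length cs}"

definition int_edges :: "'a list \<Rightarrow> 'a set set" where
  "int_edges cs = pairs (set cs) - ext cs"

definition F_edges :: "'a set set \<Rightarrow> 'a list \<Rightarrow> 'a set set" where
  "F_edges E cs = ext cs - E"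

definition is_cycle :: "'a set \<Rightarrow> 'a set set \<Rightarrow> 'a list \<Rightarrow> bool" where
  "is_cycle V E cs \<longleftrightarrow> length cs \<ge> 3 \<and> distinct cs \<and> set cs \<subseteq> V \<and>
     (\<forall>i < length cs. {cs ! i, cs ! ((i + 1) mod length cs)} \<in> E)"

definition has_chord :: "'a set set \<Rightarrow> 'a list \<Rightarrow> bool" where
  "has_chord E cs \<longleftrightarrow> (\<exists>e \<in> E. e \<in> pairs (set cs) \<and> e \<notin> ext cs)"

definition chordal :: "'a set \<Rightarrow> 'a set set \<Rightarrow> bool" where
  "chordal V E \<longleftrightarrow> (\<forall>cs. is_cycle V E cs \<and> length cs \<ge> 4 \<longrightarrow> has_chord E cs)"

definition induced_edges :: "'a set set \<Rightarrow> 'a set \<Rightarrow> 'a set set" where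
  "induced_edges E S = {e \<in> E. e \<subseteq> S}"

definition nonedges :: "'a set \<Rightarrow> 'a set set \<Rightarrow> 'a set set" where
  "nonedges V E = pairs V - E"

text \<open>X(H) as a subset of R^{E^c(H)}: coordinates are indexed by a finite type 'n,
  identified with E^c(H) through a bijection idx.\<close>
definition Xset :: "'a set \<Rightarrow> 'a set set \<Rightarrow> ('n::finite \<Rightarrow> 'a set) \<Rightarrow> (real ^ 'n) set" where
  "Xset V E idx = {x. (\<forall>i. x $ i \<in> {0, 1}) \<and> chordal V (E \<union> {idx i | i. x $ i = 1})}"

definition facet_defining :: "'v::euclidean_space set \<Rightarrow> ('v \<Rightarrow> real) \<Rightarrow> real \<Rightarrow> bool" where
  "facet_defining P g b \<longleftrightarrow> (\<forall>x\<in>P. g x \<ge> b) \<and> {x \<in> P. g x = b} facet_of P"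

end

theory Submission
  imports Defs
begin

text \<open>
  Validity: if a chordal completion contains all of \<open>F(C)\<close>, then \<open>C\<close> is a cycle of a chordal
  graph, and such a cycle of length \<open>k\<close> has at least \<open>k - 3\<close> chords (split it along one chord and
  induct); otherwise the bracket is non-positive.
  Facet: the following chordal completions lie on the face.  The fan at a cycle vertex \<open>v\<close>
  (all of \<open>F(C)\<close> plus the \<open>k - 3\<close> chords at \<open>v\<close>); its flips, which replace a chord
  \<open>{v, y}\<close> by the chord joining the two cycle-neighbours of \<open>y\<close>; and the Hamiltonian paths
  (\<open>F(C)\<close> minus one edge).  Fan minus flip connects every interior pair to a neighbour chord,
  consecutive neighbour chords are connected by flips, and fan minus path isolates each edge of
  \<open>F(C)\<close>; so these differences together with one chord direction span the whole space.  The
  complete graph and its one-edge deletions show that the polytope is full-dimensional.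
\<close>

section \<open>Pairs, paths and cycle edges\<close>

lemma pairs_subset: "p \<in> pairs S \<Longrightarrow> p \<subseteq> S"
  unfolding pairs_def by blast

lemma finite_pairs: "finite S \<Longrightarrow> finite (pairs S)"
  by (rule finite_subset[of _ "Pow S"]) (auto simp: pairs_def)

lemma doubleton_in_pairs: "u \<in> S \<Longrightarrow> w \<in> S \<Longrightarrow> u \<noteq> w \<Longrightarrow> {u, w} \<in> pairs S"
  unfolding pairs_def by blast

lemma doubleton_in_pairs_iff: "{u, w} \<in> pairs S \<longleftrightarrow> u \<in> S \<and> w \<in> S \<and> u \<noteq> w"
proof
  assume "{u, w} \<in> pairs S"
  then obtain a b where "{u, w} = {a, b}" "a \<in> S" "b \<in> S" "a \<noteq> b" unfolding pairs_def by blast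
  then show "u \<in> S \<and> w \<in> S \<and> u \<noteq> w" by (auto simp: doubleton_eq_iff)
qed (simp add: doubleton_in_pairs)

lemma pairs_mono: "S \<subseteq> T \<Longrightarrow> pairs S \<subseteq> pairs T"
  unfolding pairs_def by blast

lemma pair_subset_doubleton: "p \<in> pairs S \<Longrightarrow> p \<subseteq> {u, w} \<Longrightarrow> p = {u, w}"
  unfolding pairs_def by blast

fun path_edges :: "'a list \<Rightarrow> 'a set set" where
  "path_edges (x # y # zs) = insert {x, y} (path_edges (y # zs))"
| "path_edges _ = {}"

lemma path_edges_conv_nth:
  "path_edges xs = (\<lambda>l. {xs ! l, xs ! Suc l}) ` {l. Suc l < length xs}"
proof (induction xs rule: path_edges.induct)
  case (1 x y zs)
  have "{l. Suc l < length (x # y # zs)} = insert 0 (Suc ` {l. Suc l < length (y # zs)})"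
    by (auto simp: image_iff less_Suc_eq_0_disj)
  then show ?case using 1 by (simp add: image_image)
qed auto

lemma path_edges_append: "path_edges (xs @ y # ys) = path_edges (xs @ [y]) \<union> path_edges (y # ys)"
  by (induction xs rule: path_edges.induct) auto

lemma path_edges_snoc: "xs \<noteq> [] \<Longrightarrow> path_edges (xs @ [y]) = insert {last xs, y} (path_edges xs)"
  by (induction xs rule: path_edges.induct) (auto split: if_splits)

lemma path_edges_Cons: "xs \<noteq> [] \<Longrightarrow> path_edges (x # xs) = insert {x, hd xs} (path_edges xs)"
  by (cases xs) auto

lemma path_edges_append_split:
  assumes "xs \<noteq> []" and "ys \<noteq> []"
  shows "path_edges (xs @ ys) = insert {last xs, hd ys} (path_edges xs \<union> path_edges ys)"
proof -
  obtain y zs where "ys = y # zs" using assms(2) by (cases ys) auto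
  then show ?thesis using path_edges_append[of xs y zs] path_edges_snoc[OF assms(1), of y] by simp
qed

lemma path_edges_subset: "e \<in> path_edges xs \<Longrightarrow> e \<subseteq> set xs"
  by (induction xs rule: path_edges.induct) auto

lemma hd_last_notin_path_edges:
  assumes "distinct xs" and "3 \<le> length xs"
  shows "{hd xs, last xs} \<notin> path_edges xs"
proof
  let ?n = "length xs"
  have inj: "i = j" if "xs ! i = xs ! j" "i < ?n" "j < ?n" for i j
    using that nth_eq_iff_index_eq[OF assms(1)] by blast
  assume "{hd xs, last xs} \<in> path_edges xs"
  moreover have ne: "xs \<noteq> []" using assms(2) by auto
  ultimately have "{xs ! 0, xs ! (?n - 1)} \<in> path_edges xs"
    by (simp add: hd_conv_nth last_conv_nth)
  then obtain l where l: "{xs ! 0, xs ! (?n - 1)} = {xs ! l, xs ! Suc l}" "Suc l < ?n"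
    by (auto simp: path_edges_conv_nth)
  then consider "xs ! 0 = xs ! l" "xs ! (?n - 1) = xs ! Suc l" | "xs ! 0 = xs ! Suc l"
    by (auto simp: doubleton_eq_iff)
  then show False
  proof cases
    case 1
    then have "0 = l" "?n - 1 = Suc l" using inj[of 0 l] inj[of "?n - 1" "Suc l"] l(2) ne by simp_all
    then show False using assms(2) by simp
  next
    case 2
    then show False using inj[of 0 "Suc l"] l(2) ne by simp
  qed
qed

lemma ext_conv_path_edges: "ext (x # xs) = path_edges (x # xs @ [x])"
proof -
  let ?cs = "x # xs" and ?ys = "x # xs @ [x]"
  have nth: "?cs ! ((l + 1) mod length ?cs) = ?ys ! Suc l" "?cs ! l = ?ys ! l"
    if "l < length ?cs" for l
  proof -
    show "?cs ! l = ?ys ! l" using that nth_append[of "x # xs" "[x]" l] by simp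
    show "?cs ! ((l + 1) mod length ?cs) = ?ys ! Suc l"
    proof (cases "l = length xs")
      case True then show ?thesis by (simp add: nth_append)
    next
      case False then show ?thesis using that by (simp add: nth_append)
    qed
  qed
  have "ext ?cs = (\<lambda>l. {?ys ! l, ?ys ! Suc l}) ` {l. l < length ?cs}"
    unfolding ext_def image_def using nth by (intro Collect_cong) (metis (lifting) mem_Collect_eq)
  then show ?thesis by (simp add: path_edges_conv_nth)
qed

lemma ext_Cons_eq:
  "xs \<noteq> [] \<Longrightarrow> ext (x # xs) = insert {x, hd xs} (insert {last xs, x} (path_edges xs))"
  by (simp add: ext_conv_path_edges path_edges_Cons path_edges_snoc)

lemma ext_rotate1: "ext (rotate1 cs) = ext cs"
proof (cases cs)
  case (Cons a t)
  show ?thesis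
  proof (cases t)
    case (Cons b u)
    then show ?thesis
      using \<open>cs = a # t\<close> path_edges_append[of "b # u" a "[b]"]
      by (auto simp: ext_conv_path_edges insert_commute)
  qed (simp add: \<open>cs = a # t\<close>)
qed simp

lemma ext_rotate: "ext (rotate n cs) = ext cs"
  by (induction n) (simp_all add: ext_rotate1)

lemma ext_Cons_without_head:
  assumes "v \<notin> set t" and "t \<noteq> []" and "e \<in> ext (v # t)" and "v \<notin> e"
  shows "e \<in> path_edges t"
proof -
  have "e \<noteq> {v, hd t}" "e \<noteq> {last t, v}" using assms(4) by auto
  then show ?thesis using assms(3) by (simp add: ext_Cons_eq[OF assms(2)])
qed

lemma rotation_through:
  assumes "v \<in> set cs"
  obtains t where "set (v # t) = set cs" "ext (v # t) = ext cs"
    "length (v # t) = length cs" "distinct (v # t) = distinct cs"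
proof -
  obtain i where i: "i < length cs" "cs ! i = v" using assms by (meson in_set_conv_nth)
  moreover have ne: "rotate i cs \<noteq> []" using i by auto
  ultimately have "rotate i cs ! 0 = v" using nth_rotate[of 0 cs i] by simp
  with ne obtain t where "rotate i cs = v # t" by (metis hd_conv_nth list.collapse)
  then show thesis using that[of t] by (metis set_rotate ext_rotate length_rotate distinct_rotate)
qed

lemma is_cycle_iff_ext:
  "is_cycle V E cs \<longleftrightarrow> 3 \<le> length cs \<and> distinct cs \<and> set cs \<subseteq> V \<and> ext cs \<subseteq> E"
  unfolding is_cycle_def ext_def by blast

lemma ext_subset_pairs:
  assumes "distinct cs" and "2 \<le> length cs"
  shows "ext cs \<subseteq> pairs (set cs)"
proof
  fix e assume "e \<in> ext cs"
  then obtain i where i: "e = {cs ! i, cs ! (Suc i mod length cs)}" "i < length cs"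
    unfolding ext_def by auto
  have "Suc i mod length cs \<noteq> i"
    using i(2) assms(2) by (cases "Suc i < length cs") (auto simp: mod_if)
  moreover have "Suc i mod length cs < length cs" using i(2) by (intro mod_less_divisor) linarith
  ultimately have "cs ! i \<noteq> cs ! (Suc i mod length cs)"
    using nth_eq_iff_index_eq[OF assms(1) i(2)] by metis
  moreover have "cs ! i \<in> set cs" "cs ! (Suc i mod length cs) \<in> set cs"
    using i(2) \<open>Suc i mod length cs < length cs\<close> by simp_all
  ultimately show "e \<in> pairs (set cs)" unfolding pairs_def using i(1) by blast
qed

section \<open>Chordal graphs\<close>

definition simplicial :: "'a set \<Rightarrow> 'a set set \<Rightarrow> 'a \<Rightarrow> bool" where
  "simplicial V E v \<longleftrightarrow> (\<forall>a\<in>V. \<forall>b\<in>V. a \<noteq> b \<longrightarrow> a \<noteq> v \<longrightarrow> b \<noteq> v \<longrightarrow>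
      {v, a} \<in> E \<longrightarrow> {v, b} \<in> E \<longrightarrow> {a, b} \<in> E)"

lemma chordal_insert_vertex:
  assumes "chordal (V - {v}) E"
    and "\<And>t. distinct (v # t) \<Longrightarrow> set t \<subseteq> V \<Longrightarrow> 3 \<le> length t \<Longrightarrow> ext (v # t) \<subseteq> E
      \<Longrightarrow> has_chord E (v # t)"
  shows "chordal V E"
  unfolding chordal_def
proof (intro allI impI, elim conjE)
  fix cs assume cyc: "is_cycle V E cs" and len: "4 \<le> length cs"
  show "has_chord E cs"
  proof (cases "v \<in> set cs")
    case False
    then have "is_cycle (V - {v}) E cs" using cyc by (auto simp: is_cycle_def)
    then show ?thesis using assms(1) len by (auto simp: chordal_def)
  next
    case True
    then obtain t where t: "set (v # t) = set cs" "ext (v # t) = ext cs"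
      "length (v # t) = length cs" "distinct (v # t) = distinct cs"
      by (rule rotation_through)
    have "has_chord E (v # t)"
      using assms(2)[of t] cyc len t unfolding is_cycle_iff_ext by auto
    then show ?thesis using t by (simp add: has_chord_def)
  qed
qed

lemma has_chord_ConsI:
  assumes "distinct (v # t)" and "3 \<le> length t" and "e \<in> E"
    and "e = {hd t, last t} \<or> e = {v, t ! 1}"
  shows "has_chord E (v # t)"
proof -
  have ne: "t \<noteq> []" using assms(2) by auto
  have in_t: "hd t \<in> set t" "last t \<in> set t" "t ! 1 \<in> set t" using ne assms(2) by auto
  have v: "v \<notin> set t" using assms(1) by simp
  have "hd t \<noteq> last t" "t ! 1 \<noteq> hd t" "t ! 1 \<noteq> last t"
    using assms(1,2) ne by (auto simp: hd_conv_nth last_conv_nth nth_eq_iff_index_eq)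
  with in_t v have "e \<in> pairs (set (v # t)) \<and> e \<notin> ext (v # t)"
  proof (cases "e = {hd t, last t}")
    case True
    then show ?thesis
      using hd_last_notin_path_edges[of t] assms(1,2) in_t v \<open>hd t \<noteq> last t\<close>
      unfolding pairs_def by (auto simp: ext_Cons_eq[OF ne] doubleton_eq_iff)
  next
    case False
    then have "e = {v, t ! 1}" using assms(4) by blast
    moreover have "{v, t ! 1} \<notin> path_edges t" using v path_edges_subset by blast
    ultimately show ?thesis
      using in_t v \<open>t ! 1 \<noteq> hd t\<close> \<open>t ! 1 \<noteq> last t\<close>
      unfolding pairs_def by (auto simp: ext_Cons_eq[OF ne] doubleton_eq_iff)
  qed
  then show ?thesis using assms(3) unfolding has_chord_def by blast
qed

lemma chordal_if_simplicial:
  assumes "simplicial V E v" and "chordal (V - {v}) E"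
  shows "chordal V E"
proof (rule chordal_insert_vertex[OF assms(2)])
  fix t assume t: "distinct (v # t)" "set t \<subseteq> V" "3 \<le> length t" "ext (v # t) \<subseteq> E"
  then have ne: "t \<noteq> []" by auto
  have "{v, hd t} \<in> E" "{last t, v} \<in> E" using t(4) by (simp_all add: ext_Cons_eq[OF ne])
  then have nbrs: "{v, hd t} \<in> E" "{v, last t} \<in> E" by (simp_all add: insert_commute)
  have "hd t \<noteq> last t"
    using t(1,3) ne by (auto simp: hd_conv_nth last_conv_nth nth_eq_iff_index_eq)
  moreover have "hd t \<in> V" "last t \<in> V" "hd t \<noteq> v" "last t \<noteq> v" using t(1,2) ne by auto
  ultimately have "{hd t, last t} \<in> E" using assms(1) nbrs unfolding simplicial_def by blast
  then show "has_chord E (v # t)" by (intro has_chord_ConsI[OF t(1,3)]) blast+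
qed

lemma chordal_if_universal:
  assumes "\<And>a. a \<in> V \<Longrightarrow> a \<noteq> v \<Longrightarrow> {v, a} \<in> E" and "chordal (V - {v}) E"
  shows "chordal V E"
proof (rule chordal_insert_vertex[OF assms(2)])
  fix t assume t: "distinct (v # t)" "set t \<subseteq> V" "3 \<le> length t" "ext (v # t) \<subseteq> E"
  then have "t ! 1 \<in> V" "t ! 1 \<noteq> v" by (auto dest: nth_mem[of 1 t])
  then show "has_chord E (v # t)" by (intro has_chord_ConsI[OF t(1,3) assms(1)]) blast+
qed

lemma chordal_empty: "chordal {} E"
  by (auto simp: chordal_def is_cycle_def)

lemma chordal_complete:
  assumes "finite V" and "\<And>a b. a \<in> V \<Longrightarrow> b \<in> V \<Longrightarrow> a \<noteq> b \<Longrightarrow> {a, b} \<in> E"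
  shows "chordal V E"
  using assms
proof (induction V rule: finite_induct)
  case (insert x F)
  then show ?case using chordal_if_universal[of "insert x F" x E] by (simp add: insert_Diff_if)
qed (simp add: chordal_empty)

lemma chordal_complete_but_one:
  assumes "finite V"
    and "\<And>a b. a \<in> V \<Longrightarrow> b \<in> V \<Longrightarrow> a \<noteq> b \<Longrightarrow> {a, b} \<noteq> {u, w} \<Longrightarrow> {a, b} \<in> E"
  shows "chordal V E"
proof (rule chordal_if_simplicial)
  show "simplicial V E u"
    unfolding simplicial_def
  proof (intro ballI impI)
    fix a b assume "a \<in> V" "b \<in> V" "a \<noteq> b" "a \<noteq> u" "b \<noteq> u"
    moreover from this have "{a, b} \<noteq> {u, w}" by (auto simp: doubleton_eq_iff)
    ultimately show "{a, b} \<in> E" using assms(2) by blast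
  qed
  show "chordal (V - {u}) E"
  proof (rule chordal_complete)
    fix a b assume "a \<in> V - {u}" "b \<in> V - {u}" "a \<noteq> b"
    moreover from this have "{a, b} \<noteq> {u, w}" by (auto simp: doubleton_eq_iff)
    ultimately show "{a, b} \<in> E" using assms(2) by blast
  qed (use assms(1) in simp)
qed

lemma chordal_path:
  assumes "distinct ws"
    and "\<And>a b. a \<in> set ws \<Longrightarrow> b \<in> set ws \<Longrightarrow> a \<noteq> b \<Longrightarrow> {a, b} \<in> E \<Longrightarrow> {a, b} \<in> path_edges ws"
  shows "chordal (set ws) E"
  using assms
proof (induction ws)
  case (Cons w ws)
  have w: "w \<notin> set ws" using Cons.prems(1) by simp
  have edges: "{a, b} \<in> insert {w, hd ws} (path_edges ws)"
    if "a \<in> set (w # ws)" "b \<in> set (w # ws)" "a \<noteq> b" "{a, b} \<in> E" for a b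
    using Cons.prems(2)[OF that] by (cases ws) auto
  have "chordal (set ws) E"
  proof (rule Cons.IH)
    fix a b assume "a \<in> set ws" "b \<in> set ws" "a \<noteq> b" "{a, b} \<in> E"
    then show "{a, b} \<in> path_edges ws" using edges[of a b] w by auto
  qed (use Cons.prems(1) in simp)
  moreover have "simplicial (set (w # ws)) E w"
    unfolding simplicial_def
  proof (intro ballI impI)
    fix a b assume ab: "a \<in> set (w # ws)" "b \<in> set (w # ws)" "a \<noteq> b" "a \<noteq> w" "b \<noteq> w"
      "{w, a} \<in> E" "{w, b} \<in> E"
    have "{w, a} \<notin> path_edges ws" "{w, b} \<notin> path_edges ws" using w path_edges_subset by blast+
    then have "a = hd ws" "b = hd ws"
      using edges[of w a] edges[of w b] ab by (auto simp: doubleton_eq_iff)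
    then show "{a, b} \<in> E" using ab(3) by simp
  qed
  ultimately show ?case using chordal_if_simplicial w by (metis Diff_insert_absorb list.simps(15))
qed (simp add: chordal_empty)

lemma chordal_subset_path_edges:
  assumes "distinct ws" and "G \<subseteq> path_edges ws"
  shows "chordal (set ws) G"
  using assms by (intro chordal_path) auto

section \<open>Chords of cycles in chordal graphs\<close>

lemma chord_splits_cycle:
  assumes "{u, w} \<notin> ext (u # A @ w # B)"
  shows "A \<noteq> []" and "B \<noteq> []"
proof -
  show "A \<noteq> []" using assms by (auto simp: ext_conv_path_edges)
  show "B \<noteq> []"
    using assms path_edges_append[of "u # A" w "[u]"] by (auto simp: ext_conv_path_edges insert_commute)
qed

lemma split_cycle_at_chord:
  fixes u w :: 'a and A B :: "'a list"
  defines "cs \<equiv> u # A @ w # B" and "C1 \<equiv> u # A @ [w]" and "C2 \<equiv> w # B @ [u]"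
  assumes "distinct cs"
  shows "ext C1 \<union> ext C2 = insert {u, w} (ext cs)"
    and "int_edges C1 \<union> int_edges C2 \<subseteq> int_edges cs - {{u, w}}"
    and "int_edges C1 \<inter> int_edges C2 = {}"
proof -
  have ext_C1: "ext C1 = insert {u, w} (path_edges C1)"
    unfolding C1_def ext_conv_path_edges using path_edges_append[of "u # A" w "[u]"]
    by (simp add: insert_commute)
  have ext_C2: "ext C2 = insert {u, w} (path_edges C2)"
    unfolding C2_def ext_conv_path_edges using path_edges_append[of "w # B" u "[w]"] by simp
  have ext_cs: "ext cs = path_edges C1 \<union> path_edges C2"
    unfolding cs_def C1_def C2_def ext_conv_path_edges using path_edges_append[of "u # A" w "B @ [u]"]
    by simp
  show "ext C1 \<union> ext C2 = insert {u, w} (ext cs)" using ext_C1 ext_C2 ext_cs by blast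
  have common: "set C1 \<inter> set C2 = {u, w}" using assms unfolding cs_def C1_def C2_def by auto
  have sub: "set C1 \<subseteq> set cs" "set C2 \<subseteq> set cs" unfolding cs_def C1_def C2_def by auto
  have int_sub: "int_edges X \<subseteq> int_edges cs - {{u, w}}"
    if X: "ext X = insert {u, w} (path_edges X)" "set X \<subseteq> set cs"
      and Y: "ext cs = path_edges X \<union> path_edges Y" "set X \<inter> set Y = {u, w}" for X Y
  proof
    fix p assume "p \<in> int_edges X"
    then have p: "p \<in> pairs (set X)" "p \<notin> ext X" unfolding int_edges_def by simp_all
    then have "p \<noteq> {u, w}" "p \<notin> path_edges X" using X(1) by simp_all
    have "p \<notin> ext cs"
    proof
      assume "p \<in> ext cs"
      then have "p \<subseteq> set Y" using \<open>p \<notin> path_edges X\<close> Y(1) path_edges_subset by simp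
      moreover have "p \<subseteq> set X" using p(1) by (rule pairs_subset)
      ultimately have "p \<subseteq> {u, w}" using Y(2) by blast
      then show False using pair_subset_doubleton[OF p(1)] \<open>p \<noteq> {u, w}\<close> by simp
    qed
    moreover have "p \<in> pairs (set cs)" using p(1) pairs_mono[OF X(2)] by blast
    ultimately show "p \<in> int_edges cs - {{u, w}}"
      unfolding int_edges_def using \<open>p \<noteq> {u, w}\<close> by simp
  qed
  have "int_edges C1 \<subseteq> int_edges cs - {{u, w}}"
    by (rule int_sub[OF ext_C1 sub(1) ext_cs common])
  moreover have "int_edges C2 \<subseteq> int_edges cs - {{u, w}}"
    by (rule int_sub[OF ext_C2 sub(2)]) (use ext_cs common in blast)+
  ultimately show "int_edges C1 \<union> int_edges C2 \<subseteq> int_edges cs - {{u, w}}" by blast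
  show "int_edges C1 \<inter> int_edges C2 = {}"
  proof (rule ccontr)
    assume "int_edges C1 \<inter> int_edges C2 \<noteq> {}"
    then obtain p where "p \<in> int_edges C1" "p \<in> int_edges C2" by blast
    then have p: "p \<in> pairs (set C1)" "p \<in> pairs (set C2)" "p \<notin> ext C1"
      unfolding int_edges_def by simp_all
    then have "p \<subseteq> set C1 \<inter> set C2" using pairs_subset by (metis Int_greatest)
    then have "p = {u, w}" using pair_subset_doubleton[OF p(1)] common by simp
    then show False using p(3) ext_C1 by simp
  qed
qed

lemma cycle_split_by_chord:
  assumes "is_cycle V E cs" and "e \<in> E" and "e \<in> pairs (set cs)" and "e \<notin> ext cs"
  obtains C1 C2 where "is_cycle V E C1" "is_cycle V E C2" "length C1 + length C2 = length cs + 2"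
    "int_edges C1 \<union> int_edges C2 \<subseteq> int_edges cs - {e}" "int_edges C1 \<inter> int_edges C2 = {}"
proof -
  obtain u w where uw: "e = {u, w}" "u \<noteq> w" "u \<in> set cs" "w \<in> set cs"
    using assms(3) unfolding pairs_def by blast
  obtain t where t: "set (u # t) = set cs" "ext (u # t) = ext cs"
    "length (u # t) = length cs" "distinct (u # t) = distinct cs"
    using rotation_through[OF uw(3)] by blast
  then have "w \<in> set t" using uw by auto
  then obtain A B where AB: "t = A @ w # B" by (meson split_list)
  have cyc: "distinct (u # A @ w # B)" "set (u # A @ w # B) \<subseteq> V" "ext (u # A @ w # B) \<subseteq> E"
    using assms(1) t AB unfolding is_cycle_iff_ext by auto
  have "{u, w} \<notin> ext (u # A @ w # B)" using assms(4) uw(1) t(2) AB by simp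
  note ne = chord_splits_cycle[OF this]
  note split = split_cycle_at_chord[OF cyc(1)]
  have "ext (u # A @ [w]) \<union> ext (w # B @ [u]) \<subseteq> E" using split(1) cyc(3) assms(2) uw(1) by simp
  then have "is_cycle V E (u # A @ [w])" "is_cycle V E (w # B @ [u])"
    using cyc ne unfolding is_cycle_iff_ext by (auto simp: Suc_le_eq)
  moreover have "int_edges (u # A @ w # B) = int_edges cs" using t AB by (simp add: int_edges_def)
  ultimately show thesis
    using that[of "u # A @ [w]" "w # B @ [u]"] split(2,3) t(3) AB uw(1) by simp
qed

lemma chordal_cycle_card_chords:
  assumes "chordal V E" and "is_cycle V E cs"
  shows "length cs - 3 \<le> card (int_edges cs \<inter> E)"
  using assms(2)
proof (induction "length cs" arbitrary: cs rule: less_induct)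
  case less
  show ?case
  proof (cases "length cs \<le> 3")
    case False
    then have "has_chord E cs" using assms(1) less.prems unfolding chordal_def by simp
    then obtain e where e: "e \<in> E" "e \<in> pairs (set cs)" "e \<notin> ext cs"
      unfolding has_chord_def by blast
    then obtain C1 C2 where C: "is_cycle V E C1" "is_cycle V E C2"
      "length C1 + length C2 = length cs + 2"
      "int_edges C1 \<union> int_edges C2 \<subseteq> int_edges cs - {e}" "int_edges C1 \<inter> int_edges C2 = {}"
      using cycle_split_by_chord[OF less.prems] by blast
    have "3 \<le> length C1" "3 \<le> length C2" using C(1,2) unfolding is_cycle_def by simp_all
    then have "length C1 < length cs" "length C2 < length cs" using C(3) by simp_all
    then have IH: "length C1 - 3 \<le> card (int_edges C1 \<inter> E)" "length C2 - 3 \<le> card (int_edges C2 \<inter> E)"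
      using less.hyps C(1,2) by blast+
    let ?X1 = "int_edges C1 \<inter> E" and ?X2 = "int_edges C2 \<inter> E"
    have fin: "finite ?X1" "finite ?X2" "finite (int_edges cs)"
      by (simp_all add: int_edges_def finite_pairs)
    have "e \<in> int_edges cs" using e(2,3) unfolding int_edges_def by blast
    then have sub: "insert e (?X1 \<union> ?X2) \<subseteq> int_edges cs \<inter> E" "e \<notin> ?X1 \<union> ?X2"
      using C(4) e(1) by blast+
    have "?X1 \<inter> ?X2 = {}" using C(5) by blast
    then have "card (insert e (?X1 \<union> ?X2)) = card ?X1 + card ?X2 + 1"
      using fin sub(2) by (simp add: card_Un_disjoint)
    moreover have "card (insert e (?X1 \<union> ?X2)) \<le> card (int_edges cs \<inter> E)"
      using fin sub(1) by (intro card_mono) auto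
    ultimately show ?thesis using IH \<open>3 \<le> length C1\<close> \<open>3 \<le> length C2\<close> C(3) by simp
  qed simp
qed

section \<open>Facets of full-dimensional polytopes\<close>

lemma span_eq_UNIV_if_Basis_subset:
  fixes S :: "'v::euclidean_space set"
  assumes "Basis \<subseteq> span S"
  shows "span S = UNIV"
proof -
  have "span (Basis :: 'v set) \<subseteq> span S" using assms span_minimal subspace_span by blast
  then show ?thesis by (simp add: span_Basis top.extremum_unique)
qed

lemma aff_dim_convex_hull_eq_DIM:
  fixes X :: "'v::euclidean_space set"
  assumes "p \<in> X" and "\<And>b. b \<in> Basis \<Longrightarrow> p - b \<in> X"
  shows "aff_dim (convex hull X) = DIM('v)"
proof -
  have "b \<in> span ((\<lambda>x. x - p) ` X)" if "b \<in> Basis" for b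
  proof -
    have "(p - b) - p \<in> (\<lambda>x. x - p) ` X" using assms(2)[OF that] by blast
    then have "- ((p - b) - p) \<in> span ((\<lambda>x. x - p) ` X)" by (intro span_neg span_base)
    then show ?thesis by simp
  qed
  then have "dim ((\<lambda>x. x - p) ` X) = DIM('v)"
    using span_eq_UNIV_if_Basis_subset eucl.dim_eq_full by blast
  moreover have "aff_dim X = int (dim ((\<lambda>x. x - p) ` X))"
    by (rule aff_dim_eq_dim_subtract) (rule hull_inc[OF assms(1)])
  ultimately show ?thesis by (simp add: aff_dim_convex_hull)
qed

lemma facet_of_supporting_hyperplane:
  fixes P :: "'v::euclidean_space set" and a :: 'v and b :: real
  defines "F \<equiv> P \<inter> {x. a \<bullet> x = b}"
  assumes "convex P" and "aff_dim P = DIM('v)" and "a \<noteq> 0"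
    and "\<And>x. x \<in> P \<Longrightarrow> b \<le> a \<bullet> x"
    and "F \<noteq> {}"
    and "Basis \<subseteq> span (insert d {x - y | x y. x \<in> F \<and> y \<in> F})"
  shows "F facet_of P"
proof -
  obtain p where p: "p \<in> F" using assms(6) by blast
  let ?D = "(\<lambda>x. x - p) ` F"
  have "{x - y | x y. x \<in> F \<and> y \<in> F} \<subseteq> span ?D"
  proof clarify
    fix x y assume "x \<in> F" "y \<in> F"
    then have "(x - p) - (y - p) \<in> span ?D" by (intro span_diff span_base) auto
    then show "x - y \<in> span ?D" by simp
  qed
  moreover have "span ?D \<subseteq> span (insert d ?D)" by (rule span_mono) blast
  moreover have "d \<in> span (insert d ?D)" by (rule span_base) simp
  ultimately have "insert d {x - y | x y. x \<in> F \<and> y \<in> F} \<subseteq> span (insert d ?D)" by blast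
  then have "span (insert d {x - y | x y. x \<in> F \<and> y \<in> F}) \<subseteq> span (insert d ?D)"
    by (rule span_minimal) (rule subspace_span)
  then have "dim (insert d ?D) = DIM('v)"
    using assms(7) eucl.dim_eq_full span_eq_UNIV_if_Basis_subset by blast
  moreover have "dim (insert d ?D) \<le> dim ?D + 1" by (simp add: dim_insert)
  moreover have "aff_dim F = int (dim ?D)"
    by (rule aff_dim_eq_dim_subtract) (rule hull_inc[OF p])
  moreover have "aff_dim F \<le> aff_dim {x. a \<bullet> x = b}"
    unfolding F_def by (intro aff_dim_subset) blast
  ultimately have "aff_dim F = int DIM('v) - 1" using assms(4) by simp
  moreover have "F face_of P"
    unfolding F_def using assms(2,5) by (rule face_of_Int_supporting_hyperplane_ge)
  ultimately show ?thesis using assms(3,6) by (simp add: facet_of_def)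
qed

section \<open>The chordal cycle inequality\<close>

locale cycle_inequality =
  fixes V :: "'a set" and E :: "'a set set" and cs :: "'a list" and idx :: "'n::finite \<Rightarrow> 'a set"
  assumes simple: "simple_graph V E" and distinct: "distinct cs" and length: "4 \<le> length cs"
    and no_chords: "int_edges cs \<inter> E = {}"
    and bij_idx: "bij_betw idx UNIV (nonedges (set cs) (induced_edges E (set cs)))"
begin

abbreviation "VC \<equiv> set cs"
abbreviation "EC \<equiv> induced_edges E (set cs)"
abbreviation "NC \<equiv> nonedges (set cs) (induced_edges E (set cs))"
abbreviation "I \<equiv> int_edges cs"
abbreviation "FC \<equiv> F_edges E cs"
abbreviation "k \<equiv> length cs"
abbreviation "X \<equiv> Xset VC EC idx"
abbreviation "P \<equiv> convex hull X"

lemma ext_subset_pairs_VC: "ext cs \<subseteq> pairs VC"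
  by (rule ext_subset_pairs[OF distinct]) (use length in linarith)

lemma induced_edges_eq: "EC = ext cs - FC"
proof -
  have "EC \<subseteq> pairs VC"
  proof
    fix e assume "e \<in> EC"
    then have "e \<in> E" "e \<subseteq> VC" unfolding induced_edges_def by auto
    then obtain u v where "e = {u, v}" "u \<noteq> v" using simple unfolding simple_graph_def by blast
    then show "e \<in> pairs VC" using \<open>e \<subseteq> VC\<close> unfolding pairs_def by auto
  qed
  moreover have "pairs VC = ext cs \<union> I" using ext_subset_pairs_VC unfolding int_edges_def by blast
  ultimately show ?thesis
    using no_chords pairs_subset unfolding induced_edges_def F_edges_def by blast
qed

lemma nonedges_eq: "NC = I \<union> FC"
  using induced_edges_eq ext_subset_pairs_VC
  unfolding nonedges_def int_edges_def F_edges_def by blast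

lemma int_edges_F_edges_disjoint: "I \<inter> FC = {}"
  unfolding int_edges_def F_edges_def by blast

lemma int_edges_induced_edges_disjoint: "I \<inter> EC = {}"
  using induced_edges_eq unfolding int_edges_def by blast

lemma induced_edges_Un_F_edges: "EC \<union> FC = ext cs"
  using induced_edges_eq unfolding F_edges_def by blast

lemma finite_nonedges: "finite NC"
  unfolding nonedges_def by (simp add: finite_pairs)

lemma inj_idx: "inj idx"
  using bij_idx bij_betw_imp_inj_on by blast

lemma range_idx: "range idx = NC"
  using bij_idx bij_betw_imp_surj_on by blast

definition incidence_vector :: "'a set set \<Rightarrow> real ^ 'n" where
  "incidence_vector S = (\<chi> i. if idx i \<in> S then 1 else 0)"

lemma incidence_vector_insert:
  "c \<notin> S \<Longrightarrow> incidence_vector (insert c S) = incidence_vector S + incidence_vector {c}"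
  unfolding incidence_vector_def by (simp add: vec_eq_iff)

lemma incidence_vector_Un:
  "A \<inter> B = {} \<Longrightarrow> incidence_vector (A \<union> B) = incidence_vector A + incidence_vector B"
  unfolding incidence_vector_def by (auto simp: vec_eq_iff)

lemma incidence_vector_singleton: "incidence_vector {idx i} = axis i 1"
  unfolding incidence_vector_def axis_def using inj_idx by (auto simp: vec_eq_iff inj_eq)

lemma incidence_vector_sum: "finite S \<Longrightarrow> incidence_vector S = (\<Sum>c\<in>S. incidence_vector {c})"
proof (induction S rule: finite_induct)
  case empty
  then show ?case by (simp add: incidence_vector_def vec_eq_iff)
next
  case (insert c S)
  then show ?case by (simp add: incidence_vector_insert[OF insert.hyps(2)] add.commute)
qed

lemma sum_incidence_vector:
  assumes "A \<subseteq> NC"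
  shows "(\<Sum>i | idx i \<in> A. incidence_vector S $ i) = real (card (A \<inter> S))"
proof -
  have "(\<Sum>i | idx i \<in> A. incidence_vector S $ i) = (\<Sum>i | idx i \<in> A. if idx i \<in> S then 1 else 0)"
    unfolding incidence_vector_def by simp
  also have "\<dots> = (\<Sum>i\<in>{i \<in> {i. idx i \<in> A}. idx i \<in> S}. 1)"
    by (rule sum.inter_filter[symmetric]) simp
  also have "{i \<in> {i. idx i \<in> A}. idx i \<in> S} = {i. idx i \<in> A \<inter> S}" by blast
  also have "(\<Sum>i\<in>{i. idx i \<in> A \<inter> S}. 1) = real (card {i. idx i \<in> A \<inter> S})" by simp
  also have "card {i. idx i \<in> A \<inter> S} = card (idx ` {i. idx i \<in> A \<inter> S})"
    by (rule card_image[symmetric]) (rule inj_on_subset[OF inj_idx], simp)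
  also have "idx ` {i. idx i \<in> A \<inter> S} = A \<inter> S"
  proof (intro equalityI subsetI)
    fix c assume "c \<in> A \<inter> S"
    moreover from this obtain i where "c = idx i" using assms range_idx by blast
    ultimately show "c \<in> idx ` {i. idx i \<in> A \<inter> S}" by blast
  qed blast
  finally show ?thesis .
qed

lemma incidence_vector_in_X:
  assumes "S \<subseteq> NC"
  shows "incidence_vector S \<in> X \<longleftrightarrow> chordal VC (EC \<union> S)"
proof -
  have "{idx i | i. incidence_vector S $ i = 1} = S"
  proof (intro equalityI subsetI)
    fix c assume "c \<in> S"
    then obtain i where "c = idx i" using assms range_idx by blast
    then show "c \<in> {idx i | i. incidence_vector S $ i = 1}"
      using \<open>c \<in> S\<close> unfolding incidence_vector_def by auto
  qed (auto simp: incidence_vector_def split: if_splits)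
  then show ?thesis unfolding Xset_def by (simp add: incidence_vector_def)
qed

lemma X_incidence_vectorE:
  assumes "x \<in> X"
  obtains S where "S \<subseteq> NC" "x = incidence_vector S" "chordal VC (EC \<union> S)"
proof -
  let ?S = "{idx i | i. x $ i = 1}"
  have "?S \<subseteq> NC" using range_idx by auto
  moreover have "x = incidence_vector ?S"
    using assms inj_idx unfolding Xset_def incidence_vector_def by (auto simp: vec_eq_iff inj_eq)
  moreover have "chordal VC (EC \<union> ?S)" using assms unfolding Xset_def by simp
  ultimately show thesis by (rule that)
qed

definition lhs :: "real ^ 'n \<Rightarrow> real" where
  "lhs = (\<lambda>x. (\<Sum>i | idx i \<in> I. x $ i) - (real k - 3) * ((\<Sum>i | idx i \<in> FC. x $ i) - real (card FC) + 1))"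

lemma lhs_incidence_vector:
  assumes "S \<subseteq> NC"
  shows "lhs (incidence_vector S)
    = real (card (I \<inter> S)) - (real k - 3) * (real (card (FC \<inter> S)) - real (card FC) + 1)"
  unfolding lhs_def using sum_incidence_vector nonedges_eq by simp

lemma rotation_at:
  assumes "y \<in> VC"
  obtains t where "distinct (y # t)" "set (y # t) = VC" "length t = k - 1" "ext (y # t) = ext cs"
  using rotation_through[OF assms] distinct by (metis length_Cons diff_Suc_1)

text \<open>The two cycle-neighbours of \<open>y\<close>; as a vertex pair this is the chord created by a flip at \<open>y\<close>.\<close>

definition cycle_nbrs :: "'a \<Rightarrow> 'a set" where
  "cycle_nbrs y = {z. {y, z} \<in> ext cs}"

lemma cycle_nbrs_Cons:
  assumes "ext (y # t) = ext cs" and "y \<notin> set t" and "t \<noteq> []"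
  shows "cycle_nbrs y = {hd t, last t}"
proof (intro equalityI subsetI)
  fix z assume "z \<in> cycle_nbrs y"
  then have "{y, z} \<in> insert {y, hd t} (insert {last t, y} (path_edges t))"
    using assms(1) ext_Cons_eq[OF assms(3)] unfolding cycle_nbrs_def by simp
  moreover have "{y, z} \<notin> path_edges t" using assms(2) path_edges_subset by blast
  moreover have "hd t \<noteq> y" "last t \<noteq> y" using assms(2,3) by auto
  ultimately show "z \<in> {hd t, last t}" by (auto simp: doubleton_eq_iff)
next
  fix z assume "z \<in> {hd t, last t}"
  then show "z \<in> cycle_nbrs y"
    using assms(1) ext_Cons_eq[OF assms(3)] unfolding cycle_nbrs_def by (auto simp: insert_commute)
qed

lemma cycle_nbrs_in_int_edges:
  assumes "y \<in> VC"
  shows "cycle_nbrs y \<in> I"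
proof -
  obtain t where t: "distinct (y # t)" "set (y # t) = VC" "length t = k - 1" "ext (y # t) = ext cs"
    using rotation_at[OF assms] .
  then have ne: "t \<noteq> []" and len: "3 \<le> length t" using length by auto
  have nbrs: "cycle_nbrs y = {hd t, last t}" using cycle_nbrs_Cons t(1,4) ne by simp
  have "hd t \<noteq> last t"
    using t(1) len ne by (auto simp: hd_conv_nth last_conv_nth nth_eq_iff_index_eq)
  moreover have "hd t \<in> VC" "last t \<in> VC" using t(2) hd_in_set[OF ne] last_in_set[OF ne] by auto
  ultimately have "{hd t, last t} \<in> pairs VC" by (simp add: doubleton_in_pairs)
  moreover have "{hd t, last t} \<notin> ext cs"
  proof -
    have "y \<notin> {hd t, last t}" using t(1) ne by auto
    then have "{hd t, last t} \<noteq> {y, hd t}" "{hd t, last t} \<noteq> {last t, y}" by blast+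
    then show ?thesis
      using hd_last_notin_path_edges[of t] t(1) t(4)[symmetric] len by (simp add: ext_Cons_eq[OF ne])
  qed
  ultimately show ?thesis unfolding nbrs int_edges_def by blast
qed

definition chords_at :: "'a \<Rightarrow> 'a set set" where
  "chords_at v = {c \<in> I. v \<in> c}"

lemma chords_at_Cons:
  assumes "ext (v # t) = ext cs" and "set (v # t) = VC" and "v \<notin> set t" and "t \<noteq> []"
  shows "chords_at v = (\<lambda>z. {v, z}) ` (set t - {hd t, last t})"
proof (intro equalityI subsetI)
  fix c assume "c \<in> chords_at v"
  then have c: "c \<in> pairs VC" "c \<notin> ext cs" "v \<in> c" unfolding chords_at_def int_edges_def by auto
  then obtain z where z: "c = {v, z}" "z \<in> VC" "z \<noteq> v" unfolding pairs_def by auto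
  have "z \<noteq> hd t" "z \<noteq> last t"
    using c(2) assms(1) unfolding z(1) by (auto simp: ext_Cons_eq[OF assms(4)] insert_commute)
  then show "c \<in> (\<lambda>z. {v, z}) ` (set t - {hd t, last t})" using z assms(2) by auto
next
  fix c assume "c \<in> (\<lambda>z. {v, z}) ` (set t - {hd t, last t})"
  then obtain z where z: "c = {v, z}" "z \<in> set t" "z \<noteq> hd t" "z \<noteq> last t" by blast
  have "z \<noteq> v" using z(2) assms(3) by auto
  then have "c \<in> pairs VC" using z(1,2) assms(2) doubleton_in_pairs[of v VC z] by auto
  moreover have "c \<notin> path_edges t" using z(1) assms(3) path_edges_subset by blast
  then have "c \<notin> ext cs"
    using assms(1) z \<open>z \<noteq> v\<close> by (auto simp: ext_Cons_eq[OF assms(4)] doubleton_eq_iff)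
  ultimately show "c \<in> chords_at v" unfolding chords_at_def int_edges_def z(1) by simp
qed

lemma card_chords_at:
  assumes "v \<in> VC"
  shows "card (chords_at v) = k - 3"
proof -
  obtain t where t: "distinct (v # t)" "set (v # t) = VC" "length t = k - 1" "ext (v # t) = ext cs"
    using rotation_at[OF assms] .
  then have ne: "t \<noteq> []" and len: "3 \<le> length t" using length by auto
  have "hd t \<noteq> last t"
    using t(1) len ne by (auto simp: hd_conv_nth last_conv_nth nth_eq_iff_index_eq)
  have "inj_on (\<lambda>z. {v, z}) (set t - {hd t, last t})"
    by (auto simp: inj_on_def doubleton_eq_iff)
  then have "card (chords_at v) = card (set t - {hd t, last t})"
    using chords_at_Cons t ne by (simp add: card_image)
  also have "\<dots> = length t - 2"
    using t(1) ne \<open>hd t \<noteq> last t\<close> by (simp add: card_Diff_subset distinct_card)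
  finally show ?thesis using t(3) by simp
qed

lemma finite_chords_at: "finite (chords_at v)"
proof (rule finite_subset[OF _ finite_nonedges])
  show "chords_at v \<subseteq> NC" using nonedges_eq unfolding chords_at_def by blast
qed

lemma cycle_nbrs_notin_chords_at:
  assumes "{v, y} \<in> I"
  shows "cycle_nbrs y \<notin> chords_at v"
proof
  assume "cycle_nbrs y \<in> chords_at v"
  then have "{y, v} \<in> ext cs" unfolding chords_at_def cycle_nbrs_def by simp
  then show False using assms unfolding int_edges_def by (simp add: insert_commute)
qed

lemma chordal_fan:
  assumes "v \<in> VC"
  shows "chordal VC (ext cs \<union> chords_at v)"
proof -
  obtain t where t: "distinct (v # t)" "set (v # t) = VC" "length t = k - 1" "ext (v # t) = ext cs"
    using rotation_at[OF assms] .
  then have ne: "t \<noteq> []" and v: "v \<notin> set t" using length by auto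
  let ?G = "ext cs \<union> chords_at v"
  have "chordal (set t) ?G"
  proof (rule chordal_path)
    fix a b assume ab: "a \<in> set t" "b \<in> set t" "a \<noteq> b" "{a, b} \<in> ?G"
    then have "v \<notin> {a, b}" using v by auto
    then have "{a, b} \<notin> chords_at v" unfolding chords_at_def by blast
    then have "{a, b} \<in> ext (v # t)" using ab(4) t(4) by simp
    then show "{a, b} \<in> path_edges t" using ext_Cons_without_head[OF v ne] \<open>v \<notin> {a, b}\<close> by blast
  qed (use t(1) in simp)
  moreover have "{v, a} \<in> ?G" if "a \<in> VC" "a \<noteq> v" for a
  proof (cases "a \<in> {hd t, last t}")
    case True
    then have "{v, a} \<in> insert {v, hd t} (insert {last t, v} (path_edges t))"
      by (cases "a = hd t") (simp_all add: insert_commute)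
    then have "{v, a} \<in> ext cs" using t(4)[symmetric] by (simp add: ext_Cons_eq[OF ne])
    then show ?thesis by simp
  next
    case False
    have "a \<in> set t" using that t(2) by auto
    then have "{v, a} \<in> chords_at v" using False chords_at_Cons[OF t(4) t(2) v ne] by blast
    then show ?thesis by simp
  qed
  moreover have "VC - {v} = set t" using t(2) v by auto
  ultimately show ?thesis using chordal_if_universal[of VC v ?G] by simp
qed

lemma chordal_ext_minus_edge:
  assumes "e \<in> ext cs"
  shows "chordal VC (ext cs - {e})"
proof -
  obtain a b where ab: "e = {a, b}" "a \<in> VC"
    using assms ext_subset_pairs_VC unfolding pairs_def by blast
  obtain t where t: "distinct (a # t)" "set (a # t) = VC" "length t = k - 1" "ext (a # t) = ext cs"
    using rotation_at[OF ab(2)] .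
  then have ne: "t \<noteq> []" and a: "a \<notin> set t" using length by auto
  have "e \<notin> path_edges t" using ab(1) a path_edges_subset by blast
  then have "e = {a, hd t} \<or> e = {last t, a}"
    using assms t(4)[symmetric] by (simp add: ext_Cons_eq[OF ne])
  then show ?thesis
  proof
    assume "e = {a, hd t}"
    then have "ext cs - {e} \<subseteq> path_edges (t @ [a])"
      using t(4)[symmetric] by (auto simp: ext_Cons_eq[OF ne] path_edges_snoc[OF ne])
    moreover have "set (t @ [a]) = VC" using t(2) by auto
    ultimately show ?thesis using chordal_subset_path_edges[of "t @ [a]"] t(1) by simp
  next
    assume "e = {last t, a}"
    then have "ext cs - {e} \<subseteq> path_edges (a # t)"
      using t(4)[symmetric] by (auto simp: ext_Cons_eq[OF ne] path_edges_Cons[OF ne])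
    then show ?thesis using chordal_subset_path_edges[of "a # t"] t(1,2) by simp
  qed
qed

lemma int_edge_splits_cycle:
  assumes "{v, y} \<in> I"
  obtains A B where "distinct (v # A @ y # B)" "set (v # A @ y # B) = VC"
    "ext (v # A @ y # B) = ext cs" "A \<noteq> []" "B \<noteq> []"
proof -
  have vy: "{v, y} \<in> pairs VC" "{v, y} \<notin> ext cs" using assms unfolding int_edges_def by auto
  then have "v \<in> VC" "y \<in> VC" "v \<noteq> y" by (simp_all add: doubleton_in_pairs_iff)
  then obtain t where t: "distinct (v # t)" "set (v # t) = VC" "length t = k - 1" "ext (v # t) = ext cs"
    using rotation_at by blast
  then have "y \<in> set t" using \<open>y \<in> VC\<close> \<open>v \<noteq> y\<close> by auto
  then obtain A B where AB: "t = A @ y # B" by (meson split_list)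
  have "{v, y} \<notin> ext (v # A @ y # B)" using vy(2) t(4) AB by simp
  then have "A \<noteq> []" "B \<noteq> []" by (rule chord_splits_cycle)+
  then show thesis using that[of A B] t(1,2,4) unfolding AB by simp
qed

lemma cycle_nbrs_split:
  assumes "distinct (v # A @ y # B)" and "ext (v # A @ y # B) = ext cs" and "A \<noteq> []" and "B \<noteq> []"
  shows "cycle_nbrs y = {last A, hd B}"
proof -
  have "rotate (length (v # A)) (v # A @ y # B) = y # B @ v # A"
    using rotate_append[of "v # A" "y # B"] by simp
  then have "ext (y # B @ v # A) = ext cs" using assms(2) ext_rotate by metis
  moreover have "y \<notin> set (B @ v # A)" using assms(1) by auto
  ultimately show ?thesis using cycle_nbrs_Cons[of y "B @ v # A"] assms(3,4) by (simp add: insert_commute)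
qed

text \<open>
  The flip of the fan at \<open>v\<close> along the chord \<open>{v, y}\<close>, with the cycle read as \<open>v, A, y, B\<close>:
  \<open>y\<close> becomes simplicial, and after removing it \<open>v\<close> is universal over the path \<open>A @ B\<close>.
\<close>

context
  fixes v y :: 'a and A B :: "'a list"
  assumes flip_cycle: "distinct (v # A @ y # B)" "set (v # A @ y # B) = VC" "ext (v # A @ y # B) = ext cs"
    and flip_nonempty: "A \<noteq> []" "B \<noteq> []"
begin

lemma ext_eq_flip_cycle: "ext cs = insert {v, hd A} (insert {last B, v}
    (insert {last A, y} (insert {y, hd B} (path_edges A \<union> path_edges B))))"
  using flip_cycle(3)[symmetric] flip_nonempty path_edges_append_split[OF flip_nonempty(1), of "y # B"]
  by (simp add: ext_Cons_eq path_edges_Cons[OF flip_nonempty(2)])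

lemma chordal_flip_without:
  "chordal (VC - {y}) (ext cs \<union> (chords_at v - {{v, y}}) \<union> {{last A, hd B}})" (is "chordal _ ?G")
proof -
  let ?t = "A @ y # B"
  have v: "v \<notin> set ?t" and y: "y \<notin> set A" "y \<notin> set B" using flip_cycle(1) by auto
  have "chordal (set (A @ B)) ?G"
  proof (rule chordal_path)
    fix a b assume ab: "a \<in> set (A @ B)" "b \<in> set (A @ B)" "a \<noteq> b" "{a, b} \<in> ?G"
    have "v \<notin> {a, b}" "y \<notin> {a, b}" using ab(1,2) v y by auto
    then have "{a, b} \<notin> chords_at v" "{a, b} \<noteq> {v, hd A}" "{a, b} \<noteq> {last B, v}"
      "{a, b} \<noteq> {last A, y}" "{a, b} \<noteq> {y, hd B}"
      unfolding chords_at_def by blast+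
    moreover have "{a, b} = {last A, hd B} \<or> {a, b} \<in> ext cs"
      using ab(4) \<open>{a, b} \<notin> chords_at v\<close> by simp
    ultimately show "{a, b} \<in> path_edges (A @ B)"
      unfolding ext_eq_flip_cycle path_edges_append_split[OF flip_nonempty] by auto
  qed (use flip_cycle(1) in simp)
  moreover have "{v, a} \<in> ?G" if "a \<in> VC - {y}" "a \<noteq> v" for a
  proof (cases "a = hd A \<or> a = last B")
    case True
    then have "{v, a} = {v, hd A} \<or> {v, a} = {last B, v}"
      by (cases "a = hd A") (simp_all add: insert_commute)
    then show ?thesis unfolding ext_eq_flip_cycle by blast
  next
    case False
    have "a \<in> set ?t" "a \<noteq> y" using that flip_cycle(2) by auto
    moreover have "hd ?t = hd A" "last ?t = last B" using flip_nonempty by simp_all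
    ultimately have "{v, a} \<in> chords_at v"
      using False chords_at_Cons[OF flip_cycle(3,2) v] by blast
    moreover have "{v, a} \<noteq> {v, y}" using \<open>a \<noteq> y\<close> by (auto simp: doubleton_eq_iff)
    ultimately show ?thesis by blast
  qed
  moreover have "VC - {y} - {v} = set (A @ B)" using flip_cycle(2) v y by auto
  ultimately show ?thesis using chordal_if_universal[of "VC - {y}" v ?G] by simp
qed

lemma simplicial_flip:
  "simplicial VC (ext cs \<union> (chords_at v - {{v, y}}) \<union> {{last A, hd B}}) y" (is "simplicial _ ?G _")
  unfolding simplicial_def
proof (intro ballI impI)
  have "v \<noteq> y" "y \<notin> {last A, hd B}"
    using flip_cycle(1) last_in_set[OF flip_nonempty(1)] hd_in_set[OF flip_nonempty(2)] by auto
  have nbr: "x \<in> {last A, hd B}" if "x \<noteq> y" "{y, x} \<in> ?G" for x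
  proof -
    have "{y, x} \<noteq> {last A, hd B}" using \<open>y \<notin> {last A, hd B}\<close> by blast
    moreover have "{y, x} \<notin> chords_at v - {{v, y}}"
    proof
      assume "{y, x} \<in> chords_at v - {{v, y}}"
      then have "v \<in> {y, x}" "{y, x} \<noteq> {v, y}" unfolding chords_at_def by auto
      then show False using \<open>v \<noteq> y\<close> by (auto simp: insert_commute)
    qed
    ultimately have "{y, x} \<in> ext cs" using that(2) by blast
    then show ?thesis using cycle_nbrs_split[OF flip_cycle(1,3) flip_nonempty]
      unfolding cycle_nbrs_def by blast
  qed
  fix a b assume "a \<in> VC" "b \<in> VC" "a \<noteq> b" "a \<noteq> y" "b \<noteq> y" "{y, a} \<in> ?G" "{y, b} \<in> ?G"
  then have "a \<in> {last A, hd B}" "b \<in> {last A, hd B}" using nbr by blast+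
  then have "{a, b} = {last A, hd B}" using \<open>a \<noteq> b\<close> by blast
  then show "{a, b} \<in> ?G" by blast
qed

end

lemma chordal_flip:
  assumes "{v, y} \<in> I"
  shows "chordal VC (ext cs \<union> (chords_at v - {{v, y}}) \<union> {cycle_nbrs y})"
proof -
  obtain A B where cyc: "distinct (v # A @ y # B)" "set (v # A @ y # B) = VC"
    "ext (v # A @ y # B) = ext cs" and ne: "A \<noteq> []" "B \<noteq> []"
    using int_edge_splits_cycle[OF assms] .
  show ?thesis
    using chordal_if_simplicial[OF simplicial_flip[OF cyc ne] chordal_flip_without[OF cyc ne]]
    by (simp add: cycle_nbrs_split[OF cyc(1,3) ne])
qed

lemma lhs_nonneg_on_X:
  assumes "x \<in> X"
  shows "0 \<le> lhs x"
proof -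
  obtain S where S: "S \<subseteq> NC" "x = incidence_vector S" "chordal VC (EC \<union> S)"
    using X_incidence_vectorE[OF assms] .
  have fin: "finite FC" using finite_nonedges nonedges_eq by (simp add: finite_subset)
  show ?thesis
  proof (cases "FC \<subseteq> S")
    case True
    then have "is_cycle VC (EC \<union> S) cs"
      using distinct length induced_edges_Un_F_edges unfolding is_cycle_iff_ext by auto
    then have "k - 3 \<le> card (I \<inter> (EC \<union> S))" by (rule chordal_cycle_card_chords[OF S(3)])
    moreover have "I \<inter> (EC \<union> S) = I \<inter> S" using int_edges_induced_edges_disjoint by blast
    ultimately have "k - 3 \<le> card (I \<inter> S)" by simp
    moreover have "real (k - 3) = real k - 3" using length by simp
    ultimately have "real k - 3 \<le> real (card (I \<inter> S))" by (metis of_nat_le_iff)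
    then show ?thesis using True S by (simp add: lhs_incidence_vector Int_absorb2)
  next
    case False
    then have "card (FC \<inter> S) < card FC" using fin by (intro psubset_card_mono) auto
    then have "real (card (FC \<inter> S)) - real (card FC) + 1 \<le> 0" by linarith
    moreover have "0 \<le> real k - 3" using length by simp
    ultimately have "(real k - 3) * (real (card (FC \<inter> S)) - real (card FC) + 1) \<le> 0"
      by (rule mult_nonneg_nonpos[rotated])
    then show ?thesis using S by (simp add: lhs_incidence_vector)
  qed
qed

definition normal :: "real ^ 'n" where
  "normal = incidence_vector I - (real k - 3) *\<^sub>R incidence_vector FC"

definition offset :: real where
  "offset = (real k - 3) * (real (card FC) - 1)"

lemma inner_incidence_vector: "incidence_vector S \<bullet> x = (\<Sum>i | idx i \<in> S. x $ i)"
proof -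
  have "incidence_vector S \<bullet> x = (\<Sum>i\<in>UNIV. if idx i \<in> S then x $ i else 0)"
    unfolding incidence_vector_def inner_vec_def by (intro sum.cong) auto
  also have "\<dots> = (\<Sum>i | idx i \<in> S. x $ i)"
    by (rule sum.inter_filter[of UNIV, simplified, symmetric]) simp
  finally show ?thesis .
qed

lemma lhs_eq_inner: "lhs x = normal \<bullet> x + offset"
  unfolding lhs_def normal_def offset_def
  by (simp add: inner_diff_left inner_incidence_vector algebra_simps)

lemma normal_nonzero: "normal \<noteq> 0"
proof -
  have "cs ! 0 \<in> VC" using length by (intro nth_mem) linarith
  then have c: "cycle_nbrs (cs ! 0) \<in> I" by (rule cycle_nbrs_in_int_edges)
  then have "cycle_nbrs (cs ! 0) \<in> range idx" unfolding range_idx nonedges_eq by (rule UnI1)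
  then obtain i where i: "idx i = cycle_nbrs (cs ! 0)" by (elim rangeE) simp
  have "idx i \<notin> FC" unfolding i using c int_edges_F_edges_disjoint by blast
  then have "normal $ i = 1" using i c unfolding normal_def incidence_vector_def by simp
  then show ?thesis by (metis zero_index zero_neq_one)
qed

lemma lhs_nonneg_on_hull: "x \<in> P \<Longrightarrow> 0 \<le> lhs x"
proof -
  have "P \<subseteq> {x. - offset \<le> normal \<bullet> x}"
  proof (rule hull_minimal)
    show "X \<subseteq> {x. - offset \<le> normal \<bullet> x}"
    proof
      fix x assume "x \<in> X"
      then have "0 \<le> normal \<bullet> x + offset" using lhs_nonneg_on_X lhs_eq_inner by simp
      then show "x \<in> {x. - offset \<le> normal \<bullet> x}" by simp
    qed
  qed (rule convex_halfspace_ge)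
  then show "x \<in> P \<Longrightarrow> 0 \<le> lhs x" unfolding lhs_eq_inner by auto
qed

lemma aff_dim_hull: "aff_dim P = DIM(real ^ 'n)"
proof (rule aff_dim_convex_hull_eq_DIM)
  have complete: "chordal VC (EC \<union> S)" if "NC - {c} \<subseteq> S" for c S
  proof (cases "c \<in> pairs VC")
    case True
    then obtain u w where "c = {u, w}" unfolding pairs_def by blast
    then show ?thesis
      using that unfolding nonedges_def by (intro chordal_complete_but_one[of _ u w]) (auto intro: doubleton_in_pairs)
  next
    case False
    then show ?thesis
      using that unfolding nonedges_def by (intro chordal_complete) (auto intro: doubleton_in_pairs)
  qed
  show "incidence_vector NC \<in> X" using complete[of undefined NC] incidence_vector_in_X by blast
  fix b :: "real ^ 'n" assume "b \<in> Basis"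
  then obtain i where b: "b = axis i 1" by (auto simp: Basis_vec_def)
  have "idx i \<in> NC" using range_idx by blast
  then have "incidence_vector NC = incidence_vector (NC - {idx i}) + b"
    using incidence_vector_insert[of "idx i" "NC - {idx i}"] incidence_vector_singleton b
    by (simp add: insert_absorb)
  then show "incidence_vector NC - b \<in> X"
    using complete[of "idx i" "NC - {idx i}"] incidence_vector_in_X[of "NC - {idx i}"] by simp
qed

definition face :: "(real ^ 'n) set" where
  "face = {x \<in> P. lhs x = 0}"

lemma incidence_vector_in_face:
  assumes "S \<subseteq> NC" and "chordal VC (EC \<union> S)" and "lhs (incidence_vector S) = 0"
  shows "incidence_vector S \<in> face"
proof -
  have "incidence_vector S \<in> X" using incidence_vector_in_X[OF assms(1)] assms(2) by blast
  then show ?thesis using hull_inc assms(3) unfolding face_def by (simp add: hull_inc)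
qed

lemma fan_in_face:
  assumes "v \<in> VC"
  shows "incidence_vector (FC \<union> chords_at v) \<in> face"
proof (rule incidence_vector_in_face)
  show "FC \<union> chords_at v \<subseteq> NC" using nonedges_eq unfolding chords_at_def by blast
  have "EC \<union> (FC \<union> chords_at v) = ext cs \<union> chords_at v"
    using induced_edges_Un_F_edges by blast
  then show "chordal VC (EC \<union> (FC \<union> chords_at v))" using chordal_fan[OF assms] by simp
  have "I \<inter> (FC \<union> chords_at v) = chords_at v"
    using int_edges_F_edges_disjoint unfolding chords_at_def by blast
  moreover have "FC \<inter> (FC \<union> chords_at v) = FC" by blast
  moreover have "real (card (chords_at v)) = real k - 3"
    using card_chords_at[OF assms] length by (simp add: of_nat_diff)
  ultimately show "lhs (incidence_vector (FC \<union> chords_at v)) = 0"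
    using \<open>FC \<union> chords_at v \<subseteq> NC\<close> by (simp add: lhs_incidence_vector)
qed

lemma flip_in_face:
  assumes "{v, y} \<in> I"
  shows "incidence_vector (FC \<union> (chords_at v - {{v, y}}) \<union> {cycle_nbrs y}) \<in> face"
proof (rule incidence_vector_in_face)
  let ?S = "FC \<union> (chords_at v - {{v, y}}) \<union> {cycle_nbrs y}"
  have "v \<in> VC" "y \<in> VC"
    using assms unfolding int_edges_def by (simp_all add: doubleton_in_pairs_iff)
  then have nbrs: "cycle_nbrs y \<in> I" by (intro cycle_nbrs_in_int_edges)
  then show "?S \<subseteq> NC" using nonedges_eq unfolding chords_at_def by blast
  have "EC \<union> ?S = ext cs \<union> (chords_at v - {{v, y}}) \<union> {cycle_nbrs y}"
    using induced_edges_Un_F_edges by blast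
  then show "chordal VC (EC \<union> ?S)" using chordal_flip[OF assms] by simp
  have "I \<inter> ?S = insert (cycle_nbrs y) (chords_at v - {{v, y}})"
    using int_edges_F_edges_disjoint nbrs unfolding chords_at_def by blast
  moreover have "card (insert (cycle_nbrs y) (chords_at v - {{v, y}})) = k - 3"
  proof -
    have "{v, y} \<in> chords_at v" using assms unfolding chords_at_def by simp
    then have "card (chords_at v - {{v, y}}) = k - 3 - 1"
      using card_chords_at[OF \<open>v \<in> VC\<close>] finite_chords_at by simp
    then show ?thesis
      using cycle_nbrs_notin_chords_at[OF assms] finite_chords_at length by simp
  qed
  moreover have "FC \<inter> ?S = FC" by blast
  ultimately show "lhs (incidence_vector ?S) = 0"
    using \<open>?S \<subseteq> NC\<close> length by (simp add: lhs_incidence_vector of_nat_diff)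
qed

lemma path_in_face:
  assumes "e \<in> FC"
  shows "incidence_vector (FC - {e}) \<in> face"
proof (rule incidence_vector_in_face)
  show "FC - {e} \<subseteq> NC" using nonedges_eq by blast
  have "e \<in> ext cs" using assms unfolding F_edges_def by blast
  moreover have "EC \<union> (FC - {e}) = ext cs - {e}"
    using induced_edges_eq assms unfolding F_edges_def by blast
  ultimately show "chordal VC (EC \<union> (FC - {e}))" using chordal_ext_minus_edge by simp
  have "finite FC" using finite_subset[OF _ finite_nonedges] nonedges_eq by blast
  then have "card (FC - {e}) = card FC - 1" "0 < card FC"
    using assms card_gt_0_iff by auto
  moreover have "I \<inter> (FC - {e}) = {}" using int_edges_F_edges_disjoint by blast
  moreover have "FC \<inter> (FC - {e}) = FC - {e}" by blast
  ultimately show "lhs (incidence_vector (FC - {e})) = 0"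
    using \<open>FC - {e} \<subseteq> NC\<close> by (simp add: lhs_incidence_vector of_nat_diff)
qed

text \<open>
  Differences of face points only span directions within the supporting hyperplane; the extra
  generator, a chord direction on which \<open>normal\<close> is \<open>1\<close>, is transversal to it.
\<close>

definition face_span :: "(real ^ 'n) set" where
  "face_span = span (insert (incidence_vector {cycle_nbrs (cs ! 0)}) {x - y | x y. x \<in> face \<and> y \<in> face})"

lemma subspace_face_span: "subspace face_span"
  unfolding face_span_def by (rule subspace_span)

lemma face_diff_in_span: "x \<in> face \<Longrightarrow> y \<in> face \<Longrightarrow> x - y \<in> face_span"
  unfolding face_span_def by (intro span_base) blast

lemma flip_diff_in_span:
  assumes "{v, y} \<in> I"
  shows "incidence_vector {{v, y}} - incidence_vector {cycle_nbrs y} \<in> face_span"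
proof -
  let ?B = "FC \<union> (chords_at v - {{v, y}})"
  have v: "v \<in> VC" and y: "y \<in> VC"
    using assms unfolding int_edges_def by (simp_all add: doubleton_in_pairs_iff)
  have "{v, y} \<notin> ?B" using assms int_edges_F_edges_disjoint by blast
  moreover have "FC \<union> chords_at v = insert {v, y} ?B"
    using assms unfolding chords_at_def by blast
  ultimately have fan:
    "incidence_vector (FC \<union> chords_at v) = incidence_vector ?B + incidence_vector {{v, y}}"
    using incidence_vector_insert by metis
  have "cycle_nbrs y \<notin> ?B"
    using cycle_nbrs_in_int_edges[OF y] cycle_nbrs_notin_chords_at[OF assms] int_edges_F_edges_disjoint
    by blast
  moreover have "FC \<union> (chords_at v - {{v, y}}) \<union> {cycle_nbrs y} = insert (cycle_nbrs y) ?B" by blast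
  ultimately have flip: "incidence_vector (FC \<union> (chords_at v - {{v, y}}) \<union> {cycle_nbrs y})
      = incidence_vector ?B + incidence_vector {cycle_nbrs y}"
    using incidence_vector_insert by metis
  show ?thesis
    using face_diff_in_span[OF fan_in_face[OF v] flip_in_face[OF assms]] unfolding fan flip by simp
qed

lemma cycle_nbrs_in_span:
  assumes "j < k"
  shows "incidence_vector {cycle_nbrs (cs ! j)} \<in> face_span"
  using assms
proof (induction j)
  case 0
  show ?case unfolding face_span_def by (rule span_base) simp
next
  case (Suc j)
  let ?y = "cs ! Suc j"
  have "cs ! j \<in> VC" using Suc.prems by simp
  then have c: "cycle_nbrs (cs ! j) \<in> I" by (rule cycle_nbrs_in_int_edges)
  have "{cs ! j, cs ! ((j + 1) mod k)} \<in> ext cs"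
    unfolding ext_def using Suc.prems by (intro CollectI exI[of _ j]) simp
  then have "?y \<in> cycle_nbrs (cs ! j)" using Suc.prems unfolding cycle_nbrs_def by simp
  moreover have "cycle_nbrs (cs ! j) \<in> pairs VC" using c unfolding int_edges_def by simp
  then obtain a b where "cycle_nbrs (cs ! j) = {a, b}" unfolding pairs_def by blast
  ultimately obtain v where v: "cycle_nbrs (cs ! j) = {v, ?y}"
    by (metis insert_commute insertE singletonD)
  have d: "incidence_vector {cycle_nbrs (cs ! j)} - incidence_vector {cycle_nbrs ?y} \<in> face_span"
    using flip_diff_in_span[of v ?y] c unfolding v by simp
  have "incidence_vector {cycle_nbrs (cs ! j)} \<in> face_span" using Suc by simp
  from subspace_diff[OF subspace_face_span this d] show ?case by simp
qed

lemma chord_in_span: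
  assumes "c \<in> I"
  shows "incidence_vector {c} \<in> face_span"
proof -
  obtain a b where ab: "c = {a, b}" "b \<in> VC" using assms unfolding int_edges_def pairs_def by blast
  then obtain j where j: "j < k" "cs ! j = b" by (meson in_set_conv_nth)
  have "incidence_vector {c} - incidence_vector {cycle_nbrs b} \<in> face_span"
    using flip_diff_in_span assms unfolding ab by blast
  moreover have "incidence_vector {cycle_nbrs b} \<in> face_span" using cycle_nbrs_in_span j by blast
  ultimately have "(incidence_vector {c} - incidence_vector {cycle_nbrs b})
      + incidence_vector {cycle_nbrs b} \<in> face_span"
    by (rule subspace_add[OF subspace_face_span])
  then show ?thesis by simp
qed

lemma F_edge_in_span:
  assumes "e \<in> FC"
  shows "incidence_vector {e} \<in> face_span"
proof -
  let ?v = "cs ! 0" and ?C = "chords_at (cs ! 0)"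
  have v: "?v \<in> VC" using length by (intro nth_mem) linarith
  have "incidence_vector ?C = (\<Sum>c\<in>?C. incidence_vector {c})"
    by (rule incidence_vector_sum[OF finite_chords_at])
  also have "\<dots> \<in> face_span"
    using chord_in_span unfolding chords_at_def by (intro subspace_sum[OF subspace_face_span]) blast
  finally have chords: "incidence_vector ?C \<in> face_span" .
  have "incidence_vector (FC \<union> ?C) = incidence_vector FC + incidence_vector ?C"
    using int_edges_F_edges_disjoint unfolding chords_at_def by (intro incidence_vector_Un) blast
  moreover have "incidence_vector FC = incidence_vector (FC - {e}) + incidence_vector {e}"
    using incidence_vector_Un[of "FC - {e}" "{e}"] assms by (simp add: insert_absorb)
  ultimately have "incidence_vector (FC \<union> ?C) - incidence_vector (FC - {e})
      = incidence_vector ?C + incidence_vector {e}" by simp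
  then have "incidence_vector ?C + incidence_vector {e} \<in> face_span"
    using face_diff_in_span[OF fan_in_face[OF v] path_in_face[OF assms]] by simp
  then have "(incidence_vector ?C + incidence_vector {e}) - incidence_vector ?C \<in> face_span"
    using chords by (rule subspace_diff[OF subspace_face_span])
  then show ?thesis by simp
qed

lemma Basis_subset_face_span: "Basis \<subseteq> face_span"
proof
  fix b :: "real ^ 'n" assume "b \<in> Basis"
  then obtain i where b: "b = axis i 1" by (auto simp: Basis_vec_def)
  have "idx i \<in> I \<union> FC" using range_idx nonedges_eq by blast
  then have "incidence_vector {idx i} \<in> face_span" using chord_in_span F_edge_in_span by blast
  then show "b \<in> face_span" using b incidence_vector_singleton by simp
qed

lemma face_eq_hyperplane: "face = P \<inter> {x. normal \<bullet> x = - offset}"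
  unfolding face_def lhs_eq_inner by auto

theorem facet_defining_lhs: "facet_defining P lhs 0"
  unfolding facet_defining_def
proof
  show "\<forall>x\<in>P. 0 \<le> lhs x" using lhs_nonneg_on_hull by blast
  have "face facet_of P"
    unfolding face_eq_hyperplane
  proof (rule facet_of_supporting_hyperplane)
    show "convex P" by (rule convex_convex_hull)
    show "aff_dim P = DIM(real ^ 'n)" by (rule aff_dim_hull)
    show "normal \<noteq> 0" by (rule normal_nonzero)
    show "- offset \<le> normal \<bullet> x" if "x \<in> P" for x
      using lhs_nonneg_on_hull[OF that] lhs_eq_inner by simp
    have "cs ! 0 \<in> VC" using length by (intro nth_mem) linarith
    then show "P \<inter> {x. normal \<bullet> x = - offset} \<noteq> {}"
      using fan_in_face unfolding face_eq_hyperplane by blast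
    show "Basis \<subseteq> span (insert (incidence_vector {cycle_nbrs (cs ! 0)})
        {x - y |x y. x \<in> P \<inter> {x. normal \<bullet> x = - offset} \<and> y \<in> P \<inter> {x. normal \<bullet> x = - offset}})"
      using Basis_subset_face_span unfolding face_span_def face_eq_hyperplane .
  qed
  then show "{x \<in> P. lhs x = 0} facet_of P" unfolding face_def .
qed

end

theorem corollary1:
  fixes V :: "'a set" and E :: "'a set set" and cs :: "'a list"
    and idx :: "'n::finite \<Rightarrow> 'a set"
  assumes "simple_graph V E"
    and "distinct cs" and "set cs \<subseteq> V" and "length cs \<ge> 4"
    and "int_edges cs \<inter> E = {}"
    and "bij_betw idx UNIV (nonedges (set cs) (induced_edges E (set cs)))"
  shows "facet_defining (convex hull (Xset (set cs) (induced_edges E (set cs)) idx))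
           (\<lambda>x. (\<Sum>i | idx i \<in> int_edges cs. x $ i)
               - (real (length cs) - 3) *
                 ((\<Sum>i | idx i \<in> F_edges E cs. x $ i) - real (card (F_edges E cs)) + 1))
           0"
proof -
  interpret cycle_inequality V E cs idx
    using assms(1,2,4,5,6) by unfold_locales
  show ?thesis using facet_defining_lhs unfolding lhs_def .
qed

end
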